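(* Let $S\in\mathbb{R}^{n\times n}$ and $D\in\mathbb{R}^{r\times r}$ be real diagonal matrices and let $X\in\mathbb{R}^{n\times r}$ be such that $X^{T}X$ is diagonal and $SX=X(D+X^{T}X)$. Then there exists a scaled permutation $Y\in\mathbb{R}^{n\times r}$ such that $SY=Y(D+Y^{T}Y)$, $Y^{T}Y=X^{T}X$, and $\langle S,YY^{T}\rangle=\langle S,XX^{T}\rangle$.
   Context: A matrix is a scaled permutation if it has at most one nonzero entry in each column and at most one nonzero entry in each row. $\langle A,B\rangle=\mathrm{tr}(A^{T}B)$. *)

theory Defs
  imports "HOL-Analysis.Analysis"
begin

definition is_diag :: "real^'n^'n \<Rightarrow> bool" where
  "is_diag A \<longleftrightarrow> (\<forall>i j. i \<noteq> j \<longrightarrow> A $ i $ j = 0)"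

definition scaled_perm :: "real^'c^'r \<Rightarrow> bool" where
  "scaled_perm Y \<longleftrightarrow>
     (\<forall>i j k. Y $ i $ j \<noteq> 0 \<and> Y $ i $ k \<noteq> 0 \<longrightarrow> j = k) \<and>
     (\<forall>i k j. Y $ i $ j \<noteq> 0 \<and> Y $ k $ j \<noteq> 0 \<longrightarrow> i = k)"

definition frob_inner :: "real^'c^'r \<Rightarrow> real^'c^'r \<Rightarrow> real" where
  "frob_inner A B = trace (transpose A ** B)"

end

theory Submission
  imports Defs
begin

text \<open>
  With \<open>S\<close> and \<open>M = D + X\<^sup>T X\<close> diagonal, the equation \<open>S X = X M\<close> says that the
  \<open>j\<close>-th column of \<open>X\<close> is supported on the coordinates \<open>i\<close> with \<open>S\<^sub>i\<^sub>i = M\<^sub>j\<^sub>j\<close>.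
  Since the nonzero columns are pairwise orthogonal, there are at most as many of
  them with a given value \<open>M\<^sub>j\<^sub>j = \<mu>\<close> as there are such coordinates, so they can be
  mapped injectively to coordinates \<open>p j\<close> with \<open>S\<^bsub>p j, p j\<^esub> = M\<^sub>j\<^sub>j\<close>. Replacing
  column \<open>j\<close> by \<open>\<parallel>x\<^sub>j\<parallel> e\<^bsub>p j\<^esub>\<close> keeps the Gram matrix, hence \<open>M\<close>, the equation,
  and \<open>\<langle>S, X X\<^sup>T\<rangle> = \<Sum>\<^sub>j M\<^sub>j\<^sub>j \<parallel>x\<^sub>j\<parallel>\<^sup>2\<close>.
\<close>

lemma sum_eq_single:
  fixes f :: "'a \<Rightarrow> 'b::comm_monoid_add"
  assumes "finite A" "a \<in> A" "\<And>x. x \<in> A \<Longrightarrow> x \<noteq> a \<Longrightarrow> f x = 0"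
  shows "sum f A = f a"
  using sum.mono_neutral_right[of A "{a}" f] assms by auto

lemma diag_matrix_mult_nth:
  fixes S :: "real^'n^'n" and Z :: "real^'r^'n"
  assumes "is_diag S"
  shows "(S ** Z) $ i $ j = S $ i $ i * Z $ i $ j"
  unfolding matrix_matrix_mult_def
  using assms by (auto simp: is_diag_def intro: sum_eq_single)

lemma matrix_mult_diag_nth:
  fixes M :: "real^'r^'r" and Z :: "real^'r^'n"
  assumes "is_diag M"
  shows "(Z ** M) $ i $ j = Z $ i $ j * M $ j $ j"
  unfolding matrix_matrix_mult_def
  using assms by (auto simp: is_diag_def intro: sum_eq_single)

lemma diag_intertwine_iff:
  fixes S :: "real^'n^'n" and M :: "real^'r^'r" and Z :: "real^'r^'n"
  assumes "is_diag S" "is_diag M"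
  shows "S ** Z = Z ** M \<longleftrightarrow> (\<forall>i j. Z $ i $ j \<noteq> 0 \<longrightarrow> S $ i $ i = M $ j $ j)"
proof -
  have "S $ i $ i * Z $ i $ j = Z $ i $ j * M $ j $ j \<longleftrightarrow> (Z $ i $ j \<noteq> 0 \<longrightarrow> S $ i $ i = M $ j $ j)"
    for i j by auto
  then show ?thesis
    by (simp add: vec_eq_iff diag_matrix_mult_nth[OF assms(1)] matrix_mult_diag_nth[OF assms(2)])
qed

lemma gram_nth: "(transpose Z ** Z) $ j $ k = column j Z \<bullet> column k Z"
  by (simp add: matrix_mult_transpose_dot_column)

lemma gram_diag_nth: "(transpose Z ** Z) $ j $ j = (\<Sum>i\<in>UNIV. (Z $ i $ j)\<^sup>2)"
  by (simp add: matrix_matrix_mult_def transpose_def power2_eq_square)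

lemma frob_inner_intertwined:
  fixes S :: "real^'n^'n" and M :: "real^'r^'r" and Z :: "real^'r^'n"
  assumes "is_diag S" "is_diag M" "S ** Z = Z ** M"
  shows "frob_inner S (Z ** transpose Z) = (\<Sum>j\<in>UNIV. M $ j $ j * (transpose Z ** Z) $ j $ j)"
proof -
  have eigen: "S $ i $ i * (Z $ i $ j)\<^sup>2 = M $ j $ j * (Z $ i $ j)\<^sup>2" for i j
    using assms by (cases "Z $ i $ j = 0") (auto simp: diag_intertwine_iff)
  have "frob_inner S (Z ** transpose Z)
      = (\<Sum>i\<in>UNIV. \<Sum>k\<in>UNIV. S $ k $ i * (\<Sum>j\<in>UNIV. Z $ k $ j * Z $ i $ j))"
    by (simp add: frob_inner_def trace_def matrix_matrix_mult_def transpose_def)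
  also have "\<dots> = (\<Sum>i\<in>UNIV. S $ i $ i * (\<Sum>j\<in>UNIV. (Z $ i $ j)\<^sup>2))"
    using assms(1) by (intro sum.cong refl) (subst sum_eq_single, auto simp: is_diag_def power2_eq_square)
  also have "\<dots> = (\<Sum>i\<in>UNIV. \<Sum>j\<in>UNIV. M $ j $ j * (Z $ i $ j)\<^sup>2)"
    by (simp add: sum_distrib_left eigen)
  also have "\<dots> = (\<Sum>j\<in>UNIV. M $ j $ j * (transpose Z ** Z) $ j $ j)"
    by (subst sum.swap) (simp add: gram_diag_nth sum_distrib_left)
  finally show ?thesis .
qed

lemma card_orthogonal_supported_le:
  fixes v :: "'a \<Rightarrow> real^'n"
  assumes orth: "\<And>j k. j \<in> J \<Longrightarrow> k \<in> J \<Longrightarrow> j \<noteq> k \<Longrightarrow> v j \<bullet> v k = 0"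
    and nonzero: "\<And>j. j \<in> J \<Longrightarrow> v j \<noteq> 0"
    and support: "\<And>j i. j \<in> J \<Longrightarrow> v j $ i \<noteq> 0 \<Longrightarrow> i \<in> I"
  shows "card J \<le> card I"
proof -
  have inj: "inj_on v J"
    using orth nonzero by (metis inj_onI inner_eq_zero_iff)
  have "independent (v ` J)"
    using orth nonzero
    by (intro pairwise_orthogonal_independent) (auto simp: pairwise_def orthogonal_def)
  moreover have "v ` J \<subseteq> {x. \<forall>i. i \<notin> I \<longrightarrow> x $ i = 0}"
    using support by blast
  ultimately have "card (v ` J) \<le> dim {x :: real^'n. \<forall>i. i \<notin> I \<longrightarrow> x $ i = 0}"
    by (intro independent_card_le_dim)
  also have "\<dots> = card I"
    using dim_substandard_cart[where 'a = real, of I] by (simp add: dim_vec_eq)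
  finally show ?thesis
    by (simp add: card_image[OF inj])
qed

lemma card_nonzero_columns_eigen_le:
  fixes S :: "real^'n^'n" and M :: "real^'r^'r" and X :: "real^'r^'n"
  assumes "is_diag S" "is_diag M" "is_diag (transpose X ** X)" "S ** X = X ** M"
  shows "card {j. (transpose X ** X) $ j $ j \<noteq> 0 \<and> M $ j $ j = \<mu>} \<le> card {i. S $ i $ i = \<mu>}"
proof (rule card_orthogonal_supported_le[where v = "\<lambda>j. column j X"])
  show "column j X \<bullet> column k X = 0" if "j \<noteq> k" for j k
    using assms(3) that unfolding is_diag_def gram_nth by blast
  show "column j X \<noteq> 0" if "j \<in> {j. (transpose X ** X) $ j $ j \<noteq> 0 \<and> M $ j $ j = \<mu>}" for j
    using that by (auto simp: gram_nth)
  show "i \<in> {i. S $ i $ i = \<mu>}"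
    if "j \<in> {j. (transpose X ** X) $ j $ j \<noteq> 0 \<and> M $ j $ j = \<mu>}" "column j X $ i \<noteq> 0" for i j
    using that assms(4) unfolding diag_intertwine_iff[OF assms(1,2)] by (auto simp: column_def)
qed

lemma fibrewise_injection_exists:
  assumes "finite J" "finite B"
    and "\<And>x. card {j\<in>J. a j = x} \<le> card {i\<in>B. b i = x}"
  shows "\<exists>p. inj_on p J \<and> p ` J \<subseteq> B \<and> (\<forall>j\<in>J. b (p j) = a j)"
proof -
  have "\<forall>x. \<exists>f. f ` {j\<in>J. a j = x} \<subseteq> {i\<in>B. b i = x} \<and> inj_on f {j\<in>J. a j = x}"
    using assms by (intro allI card_le_inj) auto
  from choice[OF this] obtain f
    where f: "\<forall>x. f x ` {j\<in>J. a j = x} \<subseteq> {i\<in>B. b i = x} \<and> inj_on (f x) {j\<in>J. a j = x}"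
    by (erule exE)
  define p where "p j = f (a j) j" for j
  have p_fibre: "p j \<in> B \<and> b (p j) = a j" if "j \<in> J" for j
    using f[rule_format, of "a j"] that by (auto simp: p_def)
  have "inj_on p J"
  proof (rule inj_onI)
    fix j k assume jk: "j \<in> J" "k \<in> J" "p j = p k"
    then have "a j = a k"
      using p_fibre[of j] p_fibre[of k] by simp
    with jk f[rule_format, of "a j"] show "j = k"
      by (auto simp: p_def inj_on_def)
  qed
  with p_fibre show ?thesis by blast
qed

definition scaled_perm_matrix :: "('r \<Rightarrow> 'n) \<Rightarrow> ('r \<Rightarrow> real) \<Rightarrow> real^'r^'n" where
  "scaled_perm_matrix p c = (\<chi> i j. if c j \<noteq> 0 \<and> p j = i then sqrt (c j) else 0)"

lemma scaled_perm_matrix_nonzero: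
  "scaled_perm_matrix p c $ i $ j \<noteq> 0 \<Longrightarrow> c j \<noteq> 0 \<and> p j = i"
  by (simp add: scaled_perm_matrix_def split: if_splits)

lemma scaled_perm_scaled_perm_matrix:
  assumes "inj_on p {j. c j \<noteq> 0}"
  shows "scaled_perm (scaled_perm_matrix p c)"
proof -
  let ?Y = "scaled_perm_matrix p c"
  have "j = k" if "?Y $ i $ j \<noteq> 0" "?Y $ i $ k \<noteq> 0" for i j k
    using scaled_perm_matrix_nonzero[OF that(1)] scaled_perm_matrix_nonzero[OF that(2)] assms
    by (simp add: inj_on_def)
  moreover have "i = k" if "?Y $ i $ j \<noteq> 0" "?Y $ k $ j \<noteq> 0" for i j k
    using scaled_perm_matrix_nonzero[OF that(1)] scaled_perm_matrix_nonzero[OF that(2)] by simp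
  ultimately show ?thesis
    unfolding scaled_perm_def by blast
qed

lemma gram_scaled_perm_matrix:
  assumes "inj_on p {j. c j \<noteq> 0}" "\<And>j. c j \<ge> 0"
  shows "transpose (scaled_perm_matrix p c) ** scaled_perm_matrix p c
           = (\<chi> j k. if j = k then c j else 0)"
proof -
  let ?Y = "scaled_perm_matrix p c"
  have "(transpose ?Y ** ?Y) $ j $ k = (if j = k then c j else 0)" for j k
  proof (cases "j = k")
    case True
    have "(\<Sum>i\<in>UNIV. (?Y $ i $ j)\<^sup>2) = c j"
    proof (cases "c j = 0")
      case False
      then have "(\<Sum>i\<in>UNIV. (?Y $ i $ j)\<^sup>2) = (?Y $ p j $ j)\<^sup>2"
        by (intro sum_eq_single) (auto simp: scaled_perm_matrix_def)
      with False assms(2)[of j] show ?thesis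
        by (simp add: scaled_perm_matrix_def)
    qed (simp add: scaled_perm_matrix_def)
    with True show ?thesis
      by (simp add: gram_diag_nth)
  next
    case False
    have "?Y $ i $ j * ?Y $ i $ k = 0" for i
      using scaled_perm_matrix_nonzero[of p c i j] scaled_perm_matrix_nonzero[of p c i k]
        assms(1) False by (auto dest: inj_onD)
    then have "(\<Sum>i\<in>UNIV. ?Y $ i $ j * ?Y $ i $ k) = 0"
      by (intro sum.neutral) blast
    with False show ?thesis
      by (simp add: gram_nth column_def inner_vec_def)
  qed
  then show ?thesis
    by (simp add: vec_eq_iff)
qed

theorem lemma23:
  fixes S :: "real^'n^'n" and D :: "real^'r^'r" and X :: "real^'r^'n"
  assumes "is_diag S" and "is_diag D" and "is_diag (transpose X ** X)"
    and "S ** X = X ** (D + transpose X ** X)"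
  shows "\<exists>Y :: real^'r^'n. scaled_perm Y \<and> S ** Y = Y ** (D + transpose Y ** Y)
           \<and> transpose Y ** Y = transpose X ** X
           \<and> frob_inner S (Y ** transpose Y) = frob_inner S (X ** transpose X)"
proof -
  define G where "G = transpose X ** X"
  define M where "M = D + G"
  define c where "c j = G $ j $ j" for j
  have M_diag: "is_diag M"
    using assms(2,3) by (simp add: M_def G_def is_diag_def)
  have "\<exists>p. inj_on p {j. c j \<noteq> 0} \<and> (\<forall>j\<in>{j. c j \<noteq> 0}. S $ p j $ p j = M $ j $ j)"
    using fibrewise_injection_exists[of "{j. c j \<noteq> 0}" UNIV "\<lambda>j. M $ j $ j" "\<lambda>i. S $ i $ i"]
      card_nonzero_columns_eigen_le[OF assms(1) M_diag assms(3)] assms(4)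
    by (simp add: c_def M_def G_def)
  then obtain p where p: "inj_on p {j. c j \<noteq> 0}" "\<And>j. c j \<noteq> 0 \<Longrightarrow> S $ p j $ p j = M $ j $ j"
    by blast
  define Y where "Y = scaled_perm_matrix p c"
  have "c j \<ge> 0" for j
    by (simp add: c_def G_def gram_diag_nth sum_nonneg)
  moreover have "G = (\<chi> j k. if j = k then c j else 0)"
    using assms(3) by (auto simp: G_def c_def is_diag_def vec_eq_iff)
  ultimately have gram_Y: "transpose Y ** Y = G"
    using gram_scaled_perm_matrix[OF p(1)] by (simp add: Y_def)
  have intertwine_Y: "S ** Y = Y ** M"
    unfolding diag_intertwine_iff[OF assms(1) M_diag] Y_def
    using p(2) scaled_perm_matrix_nonzero by metis
  have "frob_inner S (Y ** transpose Y) = frob_inner S (X ** transpose X)"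
    using frob_inner_intertwined[OF assms(1) M_diag intertwine_Y]
      frob_inner_intertwined[OF assms(1) M_diag] assms(4) gram_Y
    by (simp add: M_def G_def)
  with gram_Y intertwine_Y scaled_perm_scaled_perm_matrix[OF p(1)] show ?thesis
    by (auto simp: Y_def M_def G_def)
qed

end
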